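(* Let $\mathcal{G}$ be a metric graph as in the context and suppose $\overline{\mathcal{G}}$ is compact. Then $\partial\overline{\mathcal{G}}$ is totally disconnected if and only if $\overline{\mathcal{G}}$ is weakly connected.
   Context: $\mathcal{G}$ is a connected, locally finite metric graph with countable vertex set and countable edge set. Each edge $e$ has a length $l_e>0$ and is identified with an interval of that length. $\mathcal{G}$ carries the geodesic distance (infimum of lengths of paths), and $\overline{\mathcal{G}}$ is its metric completion. A designated set of vertices, containing all vertices of degree $1$, forms the boundary vertices. $\mathcal{G}_{int}$ is $\mathcal{G}$ minus the boundary vertices, and $\partial\overline{\mathcal{G}}=\overline{\mathcal{G}}\setminus\mathcal{G}_{int}$. $\overline{\mathcal{G}}$ is weakly connected if for every pair of distinct points $x,y\in\overline{\mathcal{G}}$ there is a finite set $W$ of points of $\mathcal{G}$ and disjoint open subsets $U_x\ni x$, $U_y\ni y$ of $\overline{\mathcal{G}}$ with $\overline{\mathcal{G}}\setminus W=U_x\cup U_y$. *)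

theory Defs
  imports "HOL-Analysis.Analysis"
begin

text \<open>A metric graph is given by a vertex set V, an edge set E, an endpoint map
  ends (edge e joins fst (ends e) and snd (ends e); loops and multiple edges allowed)
  and edge lengths len. Points of the graph are vertices or interior points of edges,
  the point at distance t from fst (ends e) along e, 0 < t < len e.\<close>

datatype ('v, 'e) gpoint = Vert 'v | EdgePt 'e real

definition gpoints :: "'v set \<Rightarrow> 'e set \<Rightarrow> ('e \<Rightarrow> real) \<Rightarrow> ('v, 'e) gpoint set" where
  "gpoints V E len = Vert ` V \<union> {EdgePt e t | e t. e \<in> E \<and> 0 < t \<and> t < len e}"

inductive walk :: "'e set \<Rightarrow> ('e \<Rightarrow> 'v \<times> 'v) \<Rightarrow> 'v \<Rightarrow> 'e list \<Rightarrow> 'v \<Rightarrow> bool"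
  for E ends where
  walk_Nil: "walk E ends u [] u"
| walk_Cons: "\<lbrakk>e \<in> E; ends e = (u, w) \<or> ends e = (w, u); walk E ends w es v\<rbrakk>
               \<Longrightarrow> walk E ends u (e # es) v"

definition incident :: "'e set \<Rightarrow> ('e \<Rightarrow> 'v \<times> 'v) \<Rightarrow> 'v \<Rightarrow> 'e set" where
  "incident E ends v = {e \<in> E. fst (ends e) = v \<or> snd (ends e) = v}"

text \<open>Degree (a loop counts twice).\<close>
definition degree :: "'e set \<Rightarrow> ('e \<Rightarrow> 'v \<times> 'v) \<Rightarrow> 'v \<Rightarrow> nat" where
  "degree E ends v = card {e \<in> E. fst (ends e) = v} + card {e \<in> E. snd (ends e) = v}"

definition metric_graph ::
  "'v set \<Rightarrow> 'e set \<Rightarrow> ('e \<Rightarrow> 'v \<times> 'v) \<Rightarrow> ('e \<Rightarrow> real) \<Rightarrow> 'v set \<Rightarrow> bool" where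
  "metric_graph V E ends len B \<longleftrightarrow>
     countable V \<and> countable E \<and> V \<noteq> {} \<and>
     (\<forall>e\<in>E. fst (ends e) \<in> V \<and> snd (ends e) \<in> V \<and> 0 < len e) \<and>
     (\<forall>v\<in>V. finite (incident E ends v)) \<and>
     (\<forall>u\<in>V. \<forall>v\<in>V. \<exists>es. walk E ends u es v) \<and>
     B \<subseteq> V \<and> {v \<in> V. degree E ends v = 1} \<subseteq> B"

definition vdist :: "'e set \<Rightarrow> ('e \<Rightarrow> 'v \<times> 'v) \<Rightarrow> ('e \<Rightarrow> real) \<Rightarrow> 'v \<Rightarrow> 'v \<Rightarrow> real" where
  "vdist E ends len u v = Inf {sum_list (map len es) | es. walk E ends u es v}"

text \<open>Ways of leaving a point towards a vertex: (vertex reached, distance travelled).\<close>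
fun exits :: "('e \<Rightarrow> 'v \<times> 'v) \<Rightarrow> ('e \<Rightarrow> real) \<Rightarrow> ('v, 'e) gpoint \<Rightarrow> ('v \<times> real) set" where
  "exits ends len (Vert v) = {(v, 0)}"
| "exits ends len (EdgePt e t) = {(fst (ends e), t), (snd (ends e), len e - t)}"

text \<open>A path either stays inside one edge,
  or leaves the start point through an end of its edge, follows a walk, and enters the
  end point's edge through one of its ends.\<close>
definition gdist :: "'e set \<Rightarrow> ('e \<Rightarrow> 'v \<times> 'v) \<Rightarrow> ('e \<Rightarrow> real) \<Rightarrow>
    ('v, 'e) gpoint \<Rightarrow> ('v, 'e) gpoint \<Rightarrow> real" where
  "gdist E ends len x y = Inf
     ({\<bar>t - s\<bar> | e t s. x = EdgePt e t \<and> y = EdgePt e s} \<union>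
      {a + vdist E ends len b c + r | a b c r. (b, a) \<in> exits ends len x \<and> (c, r) \<in> exits ends len y})"

definition is_completion ::
  "'a set \<Rightarrow> ('a \<Rightarrow> 'a \<Rightarrow> real) \<Rightarrow> 'p set \<Rightarrow> ('p \<Rightarrow> 'p \<Rightarrow> real) \<Rightarrow> ('a \<Rightarrow> 'p) \<Rightarrow> bool" where
  "is_completion G d X D \<iota> \<longleftrightarrow>
     Metric_space X D \<and> Metric_space.mcomplete X D \<and> \<iota> ` G \<subseteq> X \<and>
     (\<forall>x\<in>G. \<forall>y\<in>G. D (\<iota> x) (\<iota> y) = d x y) \<and>
     Metric_space.mtopology X D closure_of (\<iota> ` G) = X"

definition totally_disconnected_in :: "'p topology \<Rightarrow> 'p set \<Rightarrow> bool" where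
  "totally_disconnected_in T S \<longleftrightarrow>
     (\<forall>C. C \<subseteq> S \<and> connectedin T C \<longrightarrow> (\<exists>a. C \<subseteq> {a}))"

definition weakly_connected :: "'p topology \<Rightarrow> 'p set \<Rightarrow> bool" where
  "weakly_connected T P \<longleftrightarrow>
     (\<forall>x\<in>topspace T. \<forall>y\<in>topspace T. x \<noteq> y \<longrightarrow>
        (\<exists>W Ux Uy. finite W \<and> W \<subseteq> P \<and> openin T Ux \<and> openin T Uy \<and>
           x \<in> Ux \<and> y \<in> Uy \<and> Ux \<inter> Uy = {} \<and> topspace T - W = Ux \<union> Uy))"

end

theory Submission
  imports Defs
begin

text \<open>Near a graph point the completion adds nothing: a ball of radius below the local radius
  consists of graph points, because it lies in the compact star of edges at the point.  Its
  spheres are finite sets of graph points, so graph points have arbitrarily small open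
  neighbourhoods whose frontier is a finite set of graph points.

  If the boundary is totally disconnected, two boundary points are separated by disjoint open
  sets covering the boundary (in a compact Hausdorff space components are quasi-components).  The
  compact remainder consists of graph points and is absorbed by finitely many such
  neighbourhoods; this produces an open set around one point, with finite frontier of graph
  points, whose closure misses the other point.  Its frontier is the finite cut set required by
  weak connectedness.

  Conversely, the graph points on the boundary are boundary vertices, which are isolated in the
  boundary.  A connected subset of the boundary with two points therefore contains no graph
  point, and the finite cut set of graph points separating the two points disconnects it.\<close>

definition finite_frontier_openin :: "'a topology \<Rightarrow> 'a set \<Rightarrow> 'a set \<Rightarrow> bool" where
  "finite_frontier_openin T P U \<longleftrightarrow>
     openin T U \<and> finite (T frontier_of U) \<and> T frontier_of U \<subseteq> P"

lemma finite_frontier_openin_Union: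
  assumes "finite \<F>" "\<And>U. U \<in> \<F> \<Longrightarrow> finite_frontier_openin T P U"
  shows "finite_frontier_openin T P (\<Union>\<F>)"
proof -
  have "T frontier_of \<Union>\<F> \<subseteq> (\<Union>U\<in>\<F>. T frontier_of U)"
    using frontier_of_Union_subset[OF assms(1)] .
  moreover have "finite (\<Union>U\<in>\<F>. T frontier_of U)" "(\<Union>U\<in>\<F>. T frontier_of U) \<subseteq> P"
    using assms unfolding finite_frontier_openin_def by auto
  ultimately show ?thesis
    using assms unfolding finite_frontier_openin_def by (auto intro: finite_subset)
qed

lemma finite_frontier_openin_complement_closure:
  assumes "finite_frontier_openin T P U"
  shows "finite_frontier_openin T P (topspace T - T closure_of U)"
proof -
  have "T frontier_of (topspace T - T closure_of U) \<subseteq> T frontier_of U"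
  proof -
    have "openin T U" using assms unfolding finite_frontier_openin_def by blast
    then have "U \<subseteq> T interior_of (T closure_of U)"
      by (simp add: closure_of_subset interior_of_maximal openin_subset)
    then show ?thesis
      unfolding frontier_of_complement
      by (auto simp: frontier_of_def interior_of_openin[OF \<open>openin T U\<close>])
  qed
  then show ?thesis
    using assms unfolding finite_frontier_openin_def by (auto intro: finite_subset)
qed

lemma finite_frontier_openin_cover_compact:
  assumes "compactin T K"
    and "\<And>p. p \<in> K \<Longrightarrow> \<exists>U. finite_frontier_openin T P U \<and> p \<in> U \<and> disjnt (T closure_of U) A"
  obtains U where "finite_frontier_openin T P U" "K \<subseteq> U" "disjnt (T closure_of U) A"
proof -
  define \<U> where "\<U> = {U. finite_frontier_openin T P U \<and> disjnt (T closure_of U) A}"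
  have "\<forall>U\<in>\<U>. openin T U" "K \<subseteq> \<Union>\<U>"
    using assms(2) unfolding \<U>_def finite_frontier_openin_def by blast+
  then obtain \<F> where \<F>: "finite \<F>" "\<F> \<subseteq> \<U>" "K \<subseteq> \<Union>\<F>"
    using assms(1) unfolding compactin_def by meson
  have "finite_frontier_openin T P (\<Union>\<F>)"
    using \<F> by (intro finite_frontier_openin_Union) (auto simp: \<U>_def)
  moreover have "disjnt (T closure_of \<Union>\<F>) A"
    using \<F> by (auto simp: closure_of_Union \<U>_def disjnt_def)
  ultimately show thesis using that \<F>(3) by blast
qed

lemma separation_in_totally_disconnected_closed:
  assumes "compact_space T" "Hausdorff_space T" "closedin T S" "totally_disconnected_in T S"
    and "x \<in> S" "y \<in> S" "x \<noteq> y"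
  obtains N1 N2 where "openin T N1" "openin T N2" "disjnt N1 N2" "x \<in> N1" "y \<in> N2" "S \<subseteq> N1 \<union> N2"
proof -
  let ?S = "subtopology T S"
  have S: "S \<subseteq> topspace T" using assms(3) closedin_subset by blast
  have "separated_between ?S {x} {y}"
  proof (rule cut_wire_fence_theorem_gen)
    show "compact_space ?S"
      by (simp add: assms(1,3) closedin_compact_space compact_space_subtopology)
    show "Hausdorff_space ?S \<or> regular_space ?S \<or> normal_space ?S"
      by (simp add: assms(2) Hausdorff_space_subtopology)
    show "compactin ?S {x}" "closedin ?S {y}"
      using assms(2,5,6) S by (auto simp: closedin_Hausdorff_singleton Hausdorff_space_subtopology)
    fix C assume "connectedin ?S C"
    then obtain a where "C \<subseteq> {a}"
      using assms(4) unfolding totally_disconnected_in_def connectedin_subtopology by blast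
    then show "disjnt C {x} \<or> disjnt C {y}" using assms(7) by (auto simp: disjnt_def)
  qed
  then obtain U V where UV: "openin ?S U" "openin ?S V" "disjnt U V" "U \<union> V = S" "x \<in> U" "y \<in> V"
    unfolding separated_between_def using S by (auto simp: Int_absorb1)
  have "U = topspace ?S - V" "V = topspace ?S - U"
    using UV(3,4) S by (auto simp: disjnt_def)
  then have "closedin ?S U" "closedin ?S V"
    using UV(1,2) by (metis closedin_diff closedin_topspace)+
  then have "compactin T U" "compactin T V"
    using assms(1,3) closedin_closed_subtopology closedin_compact_space by blast+
  then obtain N1 N2 where "openin T N1" "openin T N2" "U \<subseteq> N1" "V \<subseteq> N2" "disjnt N1 N2"
    using Hausdorff_space_compact_separation[OF assms(2)] UV(3) by metis
  then show thesis using that UV by blast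
qed

definition finite_frontier_nbhd_base :: "'a topology \<Rightarrow> 'a set \<Rightarrow> bool" where
  "finite_frontier_nbhd_base T P \<longleftrightarrow>
     (\<forall>p\<in>P. \<forall>N. openin T N \<and> p \<in> N \<longrightarrow>
        (\<exists>U. finite_frontier_openin T P U \<and> p \<in> U \<and> T closure_of U \<subseteq> N))"

lemma closure_of_subset_Diff_openin:
  "openin T Q \<Longrightarrow> U \<subseteq> topspace T - Q \<Longrightarrow> T closure_of U \<subseteq> topspace T - Q"
  by (simp add: closure_of_minimal closedin_diff)

lemma finite_frontier_nbhd_avoiding:
  assumes "finite_frontier_nbhd_base T P" "Hausdorff_space T"
    and "p \<in> P" "p \<in> topspace T" "finite A" "p \<notin> A"
  obtains U where "finite_frontier_openin T P U" "p \<in> U" "disjnt (T closure_of U) A"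
proof -
  have "closedin T (topspace T \<inter> A)"
    using closedin_Hausdorff_finite assms(2,5) by blast
  moreover have "topspace T - A = topspace T - topspace T \<inter> A" by blast
  ultimately have "openin T (topspace T - A)" by (metis openin_diff openin_topspace)
  then obtain U where "finite_frontier_openin T P U" "p \<in> U" "T closure_of U \<subseteq> topspace T - A"
    using assms(1,3,4,6) unfolding finite_frontier_nbhd_base_def by blast
  then show thesis using that by (auto simp: disjnt_def)
qed

lemma finite_frontier_openin_trim:
  assumes Q: "finite_frontier_openin T P Q"
    and N: "openin T N1" "openin T N2" "disjnt N1 N2" "topspace T - Q \<subseteq> N1 \<union> N2"
  shows "finite_frontier_openin T P (N1 - T closure_of Q)"
    and "T closure_of (N1 - T closure_of Q) \<subseteq> topspace T - N2"
proof -
  let ?U = "N1 - T closure_of Q"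
  have "openin T Q" using Q finite_frontier_openin_def by blast
  have "openin T ?U" using N(1) by (simp add: openin_diff)
  have "T closure_of ?U \<subseteq> topspace T - Q"
    using \<open>openin T Q\<close> closure_of_subset[OF openin_subset[OF \<open>openin T Q\<close>]] openin_subset[OF N(1)]
    by (intro closure_of_subset_Diff_openin) auto
  moreover show "T closure_of ?U \<subseteq> topspace T - N2"
    using N(2,3) openin_subset[OF N(1)]
    by (intro closure_of_subset_Diff_openin) (auto simp: disjnt_iff)
  ultimately have "T closure_of ?U \<subseteq> N1 - Q" using N(4) by blast
  then have "T frontier_of ?U \<subseteq> T frontier_of Q"
    using \<open>openin T ?U\<close> \<open>openin T Q\<close> by (auto simp: frontier_of_openin)
  then show "finite_frontier_openin T P ?U"
    using Q \<open>openin T ?U\<close> unfolding finite_frontier_openin_def by (auto intro: finite_subset)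
qed

lemma finite_frontier_separation_boundary:
  assumes "compact_space T" "Hausdorff_space T" "closedin T S" "totally_disconnected_in T S"
    and "topspace T - P \<subseteq> S" "finite_frontier_nbhd_base T P"
    and "x \<in> S" "y \<in> S" "x \<noteq> y"
  obtains U where "finite_frontier_openin T P U" "x \<in> U" "y \<notin> T closure_of U"
proof -
  obtain N1 N2 where N: "openin T N1" "openin T N2" "disjnt N1 N2" "x \<in> N1" "y \<in> N2"
    "S \<subseteq> N1 \<union> N2"
    using separation_in_totally_disconnected_closed assms(1-4,7-9) by metis
  define K where "K = topspace T - (N1 \<union> N2)"
  have "compactin T K"
    unfolding K_def
    by (intro closedin_compact_space[OF assms(1)] closedin_diff closedin_topspace openin_Un N(1,2))
  moreover have "\<exists>U. finite_frontier_openin T P U \<and> p \<in> U \<and> disjnt (T closure_of U) {x, y}"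
    if "p \<in> K" for p
  proof -
    have p: "p \<in> P" "p \<in> topspace T" "p \<notin> {x, y}"
      using that N(4,5,6) assms(5) unfolding K_def by auto
    obtain U where "finite_frontier_openin T P U" "p \<in> U" "disjnt (T closure_of U) {x, y}"
      by (rule finite_frontier_nbhd_avoiding[OF assms(6,2) p(1,2) _ p(3)]) simp
    then show ?thesis by blast
  qed
  ultimately obtain Q where Q: "finite_frontier_openin T P Q" "K \<subseteq> Q"
    "disjnt (T closure_of Q) {x, y}"
    by (rule finite_frontier_openin_cover_compact)
  have "topspace T - Q \<subseteq> N1 \<union> N2" using Q(2) unfolding K_def by blast
  note U = finite_frontier_openin_trim[OF Q(1) N(1-3) this]
  have "x \<in> N1 - T closure_of Q" using N(4) Q(3) unfolding disjnt_iff by blast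
  moreover have "y \<notin> T closure_of (N1 - T closure_of Q)" using U(2) N(5) by blast
  ultimately show thesis using that U(1) by blast
qed

lemma finite_frontier_separation:
  assumes "compact_space T" "Hausdorff_space T" "closedin T S" "totally_disconnected_in T S"
    and "topspace T - P \<subseteq> S" "finite_frontier_nbhd_base T P"
    and xy: "x \<in> topspace T" "y \<in> topspace T" "x \<noteq> y"
  obtains U where "finite_frontier_openin T P U" "x \<in> U" "y \<notin> T closure_of U"
proof -
  consider "x \<in> P" | "y \<in> P" | "x \<in> S" "y \<in> S" using assms(5) xy by blast
  then show thesis
  proof cases
    case 1
    obtain U where "finite_frontier_openin T P U" "x \<in> U" "disjnt (T closure_of U) {y}"
      by (rule finite_frontier_nbhd_avoiding[OF assms(6,2) 1 xy(1), of "{y}"])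
        (use xy(3) in simp_all)
    then show thesis using that by (simp add: disjnt_def)
  next
    case 2
    obtain U where U: "finite_frontier_openin T P U" "y \<in> U" "disjnt (T closure_of U) {x}"
      by (rule finite_frontier_nbhd_avoiding[OF assms(6,2) 2 xy(2), of "{x}"])
        (use xy(3) in simp_all)
    have "openin T U" using U(1) finite_frontier_openin_def by blast
    moreover have "topspace T - T closure_of U \<subseteq> topspace T - U"
      using closure_of_subset[OF openin_subset[OF \<open>openin T U\<close>]] by blast
    ultimately have "T closure_of (topspace T - T closure_of U) \<subseteq> topspace T - U"
      by (rule closure_of_subset_Diff_openin)
    moreover have "x \<in> topspace T - T closure_of U" using U(3) xy(1) by (simp add: disjnt_def)
    ultimately show thesis
      using that[OF finite_frontier_openin_complement_closure[OF U(1)]] U(2) by blast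
  next
    case 3
    then show thesis using finite_frontier_separation_boundary[OF assms(1-6)] xy(3) that by blast
  qed
qed

lemma weakly_connected_if_totally_disconnected:
  assumes "compact_space T" "Hausdorff_space T" "closedin T S" "totally_disconnected_in T S"
    and "topspace T - P \<subseteq> S" "finite_frontier_nbhd_base T P"
  shows "weakly_connected T P"
  unfolding weakly_connected_def
proof (intro ballI impI)
  fix x y assume xy: "x \<in> topspace T" "y \<in> topspace T" "x \<noteq> y"
  obtain U where U: "finite_frontier_openin T P U" "x \<in> U" "y \<notin> T closure_of U"
    using finite_frontier_separation[OF assms xy] by blast
  then have "openin T U" unfolding finite_frontier_openin_def by blast
  let ?V = "topspace T - T closure_of U"
  have "openin T ?V" by (simp add: openin_diff)
  moreover have "U \<inter> ?V = {}"
    using closure_of_subset[OF openin_subset[OF \<open>openin T U\<close>]] by blast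
  moreover have "topspace T - T frontier_of U = U \<union> ?V"
    using openin_subset[OF \<open>openin T U\<close>] closure_of_subset_topspace[of T U]
    by (auto simp: frontier_of_openin[OF \<open>openin T U\<close>])
  moreover have "finite (T frontier_of U)" "T frontier_of U \<subseteq> P"
    using U(1) unfolding finite_frontier_openin_def by blast+
  moreover have "y \<in> ?V" using U(3) xy(2) by blast
  ultimately show "\<exists>W Ux Uy. finite W \<and> W \<subseteq> P \<and> openin T Ux \<and> openin T Uy \<and>
      x \<in> Ux \<and> y \<in> Uy \<and> Ux \<inter> Uy = {} \<and> topspace T - W = Ux \<union> Uy"
    using \<open>openin T U\<close> U(2)
    by (intro exI[of _ "T frontier_of U"] exI[of _ U] exI[of _ ?V]) simp
qed

lemma connectedin_isolated_point:
  assumes "connectedin T C" "t1_space T" "openin T N" "N \<inter> C = {p}"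
  shows "C = {p}"
proof (rule ccontr)
  assume "C \<noteq> {p}"
  let ?N' = "topspace T - {p}"
  have CT: "C \<subseteq> topspace T" using connectedin_subset_topspace[OF assms(1)] .
  have p: "p \<in> C" "p \<in> N" using assms(4) by auto
  have "closedin T {p}" using closedin_t1_singleton[OF assms(2)] p(1) CT by auto
  then have "openin T ?N'" by (rule openin_diff[OF openin_topspace])
  moreover have "C \<subseteq> N \<union> ?N'" using CT p(2) by auto
  moreover have "N \<inter> ?N' \<inter> C = {}" using assms(4) by auto
  moreover have "N \<inter> C \<noteq> {}" using p by auto
  moreover have "?N' \<inter> C \<noteq> {}" using \<open>C \<noteq> {p}\<close> p(1) CT by auto
  ultimately show False using assms(1,3) unfolding connectedin by meson
qed

lemma totally_disconnected_if_weakly_connected: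
  assumes "weakly_connected T P" "t1_space T"
    and isolated: "\<And>p. p \<in> S \<inter> P \<Longrightarrow> \<exists>N. openin T N \<and> N \<inter> S = {p}"
  shows "totally_disconnected_in T S"
  unfolding totally_disconnected_in_def
proof (intro allI impI)
  fix C assume "C \<subseteq> S \<and> connectedin T C"
  then have CS: "C \<subseteq> S" and conn: "connectedin T C" by simp_all
  then have CT: "C \<subseteq> topspace T" by (simp add: connectedin_subset_topspace)
  show "\<exists>a. C \<subseteq> {a}"
  proof (rule ccontr)
    assume C_nontrivial: "\<nexists>a. C \<subseteq> {a}"
    then obtain x where x: "x \<in> C" by blast
    then obtain y where y: "y \<in> C" "y \<noteq> x" using C_nontrivial by blast
    have notP: "p \<notin> P" if "p \<in> C" for p
    proof
      assume "p \<in> P"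
      with that CS obtain N where N: "openin T N" "N \<inter> S = {p}" using isolated by blast
      then have "N \<inter> C = {p}" using CS that by blast
      then have "C = {p}" by (rule connectedin_isolated_point[OF conn assms(2) N(1)])
      then show False using x y by simp
    qed
    obtain W Ux Uy where W: "W \<subseteq> P" "openin T Ux" "openin T Uy" "x \<in> Ux" "y \<in> Uy"
      "Ux \<inter> Uy = {}" "topspace T - W = Ux \<union> Uy"
      using assms(1)[unfolded weakly_connected_def, rule_format, of x y] x y CT by blast
    have "C \<subseteq> Ux \<union> Uy" using notP CT W(1,7) by blast
    moreover have "Ux \<inter> Uy \<inter> C = {}" using W(6) by blast
    moreover have "Ux \<inter> C \<noteq> {}" "Uy \<inter> C \<noteq> {}" using W(4,5) x y(1) by blast+
    ultimately show False using conn W(2,3) unfolding connectedin by meson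
  qed
qed

definition gdist_candidates :: "'e set \<Rightarrow> ('e \<Rightarrow> 'v \<times> 'v) \<Rightarrow> ('e \<Rightarrow> real) \<Rightarrow>
    ('v, 'e) gpoint \<Rightarrow> ('v, 'e) gpoint \<Rightarrow> real set" where
  "gdist_candidates E ends len x y =
     {\<bar>t - s\<bar> | e t s. x = EdgePt e t \<and> y = EdgePt e s} \<union>
     {a + vdist E ends len b c + r | a b c r.
        (b, a) \<in> exits ends len x \<and> (c, r) \<in> exits ends len y}"

lemma finite_exits: "finite (exits ends len x)"
  by (cases x) auto

lemma finite_gdist_candidates: "finite (gdist_candidates E ends len x y)"
proof -
  let ?S = "{\<bar>t - s\<bar> | e t s. x = EdgePt e t \<and> y = EdgePt e s}"
  let ?f = "\<lambda>((b, a), (c, r)). a + vdist E ends len b c + r"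
  have "finite ?S"
  proof (cases "\<exists>e t s. x = EdgePt e t \<and> y = EdgePt e s")
    case True
    then obtain e t s where "x = EdgePt e t" "y = EdgePt e s" by blast
    then have "?S = {\<bar>t - s\<bar>}" by auto
    then show ?thesis by simp
  next
    case False
    then have "?S = {}" by auto
    then show ?thesis by (metis finite.emptyI)
  qed
  moreover have "{a + vdist E ends len b c + r | a b c r.
      (b, a) \<in> exits ends len x \<and> (c, r) \<in> exits ends len y} \<subseteq>
      ?f ` (exits ends len x \<times> exits ends len y)"
  proof
    fix z assume "z \<in> {a + vdist E ends len b c + r | a b c r.
      (b, a) \<in> exits ends len x \<and> (c, r) \<in> exits ends len y}"
    then obtain a b c r where "z = a + vdist E ends len b c + r"
      "((b, a), (c, r)) \<in> exits ends len x \<times> exits ends len y" by blast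
    then show "z \<in> ?f ` (exits ends len x \<times> exits ends len y)"
      by (metis (no_types, lifting) case_prod_conv image_eqI)
  qed
  then have "finite {a + vdist E ends len b c + r | a b c r.
      (b, a) \<in> exits ends len x \<and> (c, r) \<in> exits ends len y}"
    by (rule finite_subset) (simp add: finite_exits)
  ultimately show ?thesis
    unfolding gdist_candidates_def by blast
qed

lemma gdist_candidates_nonempty: "gdist_candidates E ends len x y \<noteq> {}"
proof -
  obtain b a c r where "(b, a) \<in> exits ends len x" "(c, r) \<in> exits ends len y"
    by (cases x; cases y) auto
  then show ?thesis unfolding gdist_candidates_def by blast
qed

text \<open>The infimum defining the geodesic distance ranges over finitely many values, so it is
  attained.\<close>

lemma gdist_eq_Min: "gdist E ends len x y = Min (gdist_candidates E ends len x y)"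
  unfolding gdist_def gdist_candidates_def[symmetric]
  by (simp add: cInf_eq_Min finite_gdist_candidates gdist_candidates_nonempty)

lemma gdist_le_candidate: "z \<in> gdist_candidates E ends len x y \<Longrightarrow> gdist E ends len x y \<le> z"
  by (simp add: gdist_eq_Min finite_gdist_candidates)

lemma gdist_le_exits:
  "(b, a) \<in> exits ends len x \<Longrightarrow> (c, r) \<in> exits ends len y \<Longrightarrow>
    gdist E ends len x y \<le> a + vdist E ends len b c + r"
  by (rule gdist_le_candidate) (auto simp: gdist_candidates_def)

lemma gdist_EdgePt_le: "gdist E ends len (EdgePt e t) (EdgePt e s) \<le> \<bar>t - s\<bar>"
  by (rule gdist_le_candidate) (auto simp: gdist_candidates_def)

lemma gdist_cases:
  obtains e t s where "x = EdgePt e t" "y = EdgePt e s" "gdist E ends len x y = \<bar>t - s\<bar>"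
  | b a c r where "(b, a) \<in> exits ends len x" "(c, r) \<in> exits ends len y"
      "gdist E ends len x y = a + vdist E ends len b c + r"
proof -
  have "gdist E ends len x y \<in> gdist_candidates E ends len x y"
    by (simp add: gdist_eq_Min finite_gdist_candidates gdist_candidates_nonempty)
  then show thesis using that unfolding gdist_candidates_def by blast
qed

lemma walk_first_edge:
  assumes "walk E ends u es w" "u \<noteq> w"
  obtains e es' w' where "es = e # es'" "e \<in> incident E ends u" "walk E ends w' es' w"
  using assms
proof cases
  case (walk_Cons e w' es')
  then show thesis using that unfolding incident_def by force
qed simp

locale mgraph =
  fixes V :: "'v set" and E :: "'e set" and ends :: "'e \<Rightarrow> 'v \<times> 'v"
    and len :: "'e \<Rightarrow> real" and B :: "'v set"
  assumes metric_graph: "metric_graph V E ends len B"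
begin

abbreviation "G \<equiv> gpoints V E len"
abbreviation "vd \<equiv> vdist E ends len"
abbreviation "gd \<equiv> gdist E ends len"

lemma len_pos: "e \<in> E \<Longrightarrow> 0 < len e"
  using metric_graph unfolding metric_graph_def by auto

lemma ends_in_V: "e \<in> E \<Longrightarrow> fst (ends e) \<in> V" "e \<in> E \<Longrightarrow> snd (ends e) \<in> V"
  using metric_graph unfolding metric_graph_def by auto

lemma finite_incident: "v \<in> V \<Longrightarrow> finite (incident E ends v)"
  using metric_graph unfolding metric_graph_def by auto

lemma walk_exists: "u \<in> V \<Longrightarrow> v \<in> V \<Longrightarrow> \<exists>es. walk E ends u es v"
  using metric_graph unfolding metric_graph_def by auto

lemma boundary_subset: "B \<subseteq> V"
  using metric_graph unfolding metric_graph_def by auto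

lemma incident_subset: "incident E ends v \<subseteq> E"
  unfolding incident_def by auto

lemma Vert_in_G [simp]: "Vert v \<in> G \<longleftrightarrow> v \<in> V"
  unfolding gpoints_def by auto

lemma EdgePt_in_G [simp]: "EdgePt e t \<in> G \<longleftrightarrow> e \<in> E \<and> 0 < t \<and> t < len e"
  unfolding gpoints_def by auto

lemma walk_length_nonneg: "walk E ends u es w \<Longrightarrow> 0 \<le> sum_list (map len es)"
  by (induction rule: walk.induct) (auto intro: add_nonneg_nonneg less_imp_le len_pos)

lemma vdist_le_walk: "walk E ends u es w \<Longrightarrow> vd u w \<le> sum_list (map len es)"
  unfolding vdist_def
  by (rule cInf_lower) (auto intro!: bdd_belowI[where m = 0] walk_length_nonneg)

lemma vdist_ge:
  assumes "u \<in> V" "w \<in> V" "\<And>es. walk E ends u es w \<Longrightarrow> c \<le> sum_list (map len es)"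
  shows "c \<le> vd u w"
  using walk_exists[OF assms(1,2)] unfolding vdist_def
  by (intro cInf_greatest) (auto intro: assms(3))

lemma vdist_nonneg: "u \<in> V \<Longrightarrow> w \<in> V \<Longrightarrow> 0 \<le> vd u w"
  by (rule vdist_ge) (auto intro: walk_length_nonneg)

lemma vdist_refl: "u \<in> V \<Longrightarrow> vd u u = 0"
  using vdist_le_walk[OF walk_Nil, of u] vdist_nonneg[of u u] by simp

lemma vdist_edge: "e \<in> E \<Longrightarrow> vd (fst (ends e)) (snd (ends e)) \<le> len e"
  using vdist_le_walk[OF walk_Cons[OF _ _ walk_Nil], of e "fst (ends e)" "snd (ends e)"] by simp

lemma exits_in_V: "x \<in> G \<Longrightarrow> (b, a) \<in> exits ends len x \<Longrightarrow> b \<in> V \<and> 0 \<le> a"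
  by (cases x) (auto simp: ends_in_V)

text \<open>The cap 1 only matters at vertices without incident edges, where the minimum would be
  taken over the empty set.\<close>

fun local_radius :: "('v, 'e) gpoint \<Rightarrow> real" where
  "local_radius (Vert v) = Min (insert 1 ((\<lambda>e. len e / 2) ` incident E ends v))"
| "local_radius (EdgePt e t) = min t (len e - t)"

fun local_edges :: "('v, 'e) gpoint \<Rightarrow> 'e set" where
  "local_edges (Vert v) = incident E ends v"
| "local_edges (EdgePt e t) = {e}"

lemma local_radius_pos:
  assumes "g \<in> G" shows "0 < local_radius g"
proof (cases g)
  case (Vert v)
  then have "finite (incident E ends v)" using assms finite_incident by simp
  then show ?thesis
    unfolding Vert local_radius.simps using len_pos incident_subset by (subst Min_gr_iff) auto
qed (use assms in auto)

lemma local_radius_Vert_le: "v \<in> V \<Longrightarrow> e \<in> incident E ends v \<Longrightarrow> local_radius (Vert v) \<le> len e / 2"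
  unfolding local_radius.simps by (rule Min_le) (auto simp: finite_incident)

lemma finite_local_edges: "g \<in> G \<Longrightarrow> finite (local_edges g)"
  by (cases g) (auto simp: finite_incident)

lemma local_edges_subset: "g \<in> G \<Longrightarrow> local_edges g \<subseteq> E"
  by (cases g) (auto simp: incident_subset)

lemma vdist_ge_local_radius:
  assumes "v \<in> V" "w \<in> V" "v \<noteq> w"
  shows "2 * local_radius (Vert v) \<le> vd v w"
proof (rule vdist_ge[OF assms(1,2)])
  fix es assume "walk E ends v es w"
  then obtain e es' w' where "es = e # es'" "e \<in> incident E ends v" "walk E ends w' es' w"
    using walk_first_edge assms(3) by metis
  then show "2 * local_radius (Vert v) \<le> sum_list (map len es)"
    using local_radius_Vert_le[OF assms(1)] walk_length_nonneg by fastforce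
qed

lemma gdist_near_EdgePt:
  assumes "EdgePt e t \<in> G" "h \<in> G" "gd (EdgePt e t) h < local_radius (EdgePt e t)"
  obtains s where "h = EdgePt e s" "gd (EdgePt e t) h = \<bar>t - s\<bar>"
proof (cases rule: gdist_cases[of "EdgePt e t" h E ends len])
  case (2 b a c r)
  have "a = t \<or> a = len e - t" using 2(1) by auto
  moreover have "0 \<le> vd b c" "0 \<le> r"
    using exits_in_V[OF assms(1) 2(1)] exits_in_V[OF assms(2) 2(2)] vdist_nonneg by auto
  ultimately show thesis using 2(3) assms(3) by auto
qed (use that in auto)

lemma gdist_near_Vert:
  assumes "v \<in> V" "h \<in> G" "gd (Vert v) h < local_radius (Vert v)"
  shows "h = Vert v \<and> gd (Vert v) h = 0 \<or>
    (\<exists>e s. h = EdgePt e s \<and> e \<in> incident E ends v \<and>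
       (fst (ends e) = v \<and> gd (Vert v) h = s \<or> snd (ends e) = v \<and> gd (Vert v) h = len e - s))"
proof (cases rule: gdist_cases[of "Vert v" h E ends len])
  case (2 b a c r)
  have ba: "b = v" "a = 0" using 2(1) by auto
  have c: "c \<in> V" "0 \<le> r" using exits_in_V[OF assms(2) 2(2)] by auto
  have "c = v"
  proof (rule ccontr)
    assume "c \<noteq> v"
    then have "2 * local_radius (Vert v) \<le> vd v c"
      using vdist_ge_local_radius assms(1) c(1) by blast
    then show False
      using 2(3) assms(3) ba c(2) local_radius_pos[of "Vert v"] assms(1) by auto
  qed
  then have r: "gd (Vert v) h = r" "(v, r) \<in> exits ends len h"
    using 2 ba vdist_refl[OF assms(1)] by auto
  show ?thesis
  proof (cases h)
    case (EdgePt e s)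
    then have "e \<in> incident E ends v" using r(2) assms(2) unfolding incident_def by auto
    then show ?thesis using EdgePt r by auto
  qed (use r in auto)
qed auto

lemma near_point_cases:
  assumes "g \<in> G" "h \<in> G" "gd g h < local_radius g"
  shows "h = g \<or> (\<exists>e\<in>local_edges g. \<exists>s. h = EdgePt e s)"
proof (cases g)
  case (Vert v)
  then show ?thesis using gdist_near_Vert[of v h] assms by auto
next
  case (EdgePt e t)
  then show ?thesis using gdist_near_EdgePt[of e t h] assms by auto
qed

lemma finite_gdist_sphere:
  assumes "g \<in> G" "0 < r" "r < local_radius g"
  shows "finite {h \<in> G. gd g h = r}"
proof (cases g)
  case (Vert v)
  have "{h \<in> G. gd g h = r} \<subseteq>
      (\<lambda>e. EdgePt e r) ` incident E ends v \<union> (\<lambda>e. EdgePt e (len e - r)) ` incident E ends v"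
    using gdist_near_Vert[of v] assms Vert by fastforce
  then show ?thesis by (rule finite_subset) (use finite_incident assms(1) Vert in simp)
next
  case (EdgePt e t)
  have "{h \<in> G. gd g h = r} \<subseteq> {EdgePt e (t - r), EdgePt e (t + r)}"
  proof
    fix h assume h: "h \<in> {h \<in> G. gd g h = r}"
    then obtain s where s: "h = EdgePt e s" "gd (EdgePt e t) h = \<bar>t - s\<bar>"
      using gdist_near_EdgePt[of e t h] assms EdgePt by auto
    then have "\<bar>t - s\<bar> = r" using h EdgePt by simp
    with s(1) show "h \<in> {EdgePt e (t - r), EdgePt e (t + r)}" by auto
  qed
  then show ?thesis by (rule finite_subset) simp
qed

definition edge_point :: "'e \<Rightarrow> real \<Rightarrow> ('v, 'e) gpoint" where
  "edge_point e s = (if s \<le> 0 then Vert (fst (ends e))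
     else if len e \<le> s then Vert (snd (ends e)) else EdgePt e s)"

lemma edge_point_in_G: "e \<in> E \<Longrightarrow> edge_point e s \<in> G"
  by (simp add: edge_point_def ends_in_V)

lemma edge_point_EdgePt: "0 < s \<Longrightarrow> s < len e \<Longrightarrow> edge_point e s = EdgePt e s"
  by (simp add: edge_point_def)

lemma gdist_edge_point_le:
  assumes "e \<in> E" "s \<le> t"
  shows "gd (edge_point e s) (edge_point e t) \<le> t - s"
proof -
  let ?u = "fst (ends e)" and ?w = "snd (ends e)"
  have u: "vd ?u ?u = 0" and w: "vd ?w ?w = 0" and uw: "vd ?u ?w \<le> len e"
    using vdist_refl ends_in_V vdist_edge assms(1) by auto
  have "0 < len e" using len_pos assms(1) .
  consider "t \<le> 0" | "len e \<le> s" | "0 < s" "t < len e" | "s \<le> 0" "0 < t" "t < len e"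
    | "0 < s" "s < len e" "len e \<le> t" | "s \<le> 0" "len e \<le> t"
    using assms(2) by linarith
  then show ?thesis
  proof cases
    case 1
    have "gd (Vert ?u) (Vert ?u) \<le> 0 + vd ?u ?u + 0" by (rule gdist_le_exits) simp_all
    then show ?thesis using 1 u assms(2) by (simp add: edge_point_def)
  next
    case 2
    have "gd (Vert ?w) (Vert ?w) \<le> 0 + vd ?w ?w + 0" by (rule gdist_le_exits) simp_all
    then show ?thesis using 2 w assms(2) \<open>0 < len e\<close> by (simp add: edge_point_def)
  next
    case 3
    then show ?thesis
      using gdist_EdgePt_le[of E ends len e s t] assms(2) by (simp add: edge_point_EdgePt)
  next
    case 4
    have "gd (Vert ?u) (EdgePt e t) \<le> 0 + vd ?u ?u + t" by (rule gdist_le_exits) simp_all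
    then show ?thesis using 4 u by (simp add: edge_point_def)
  next
    case 5
    have "gd (EdgePt e s) (Vert ?w) \<le> (len e - s) + vd ?w ?w + 0" by (rule gdist_le_exits) simp_all
    then show ?thesis using 5 w by (simp add: edge_point_def)
  next
    case 6
    have "gd (Vert ?u) (Vert ?w) \<le> 0 + vd ?u ?w + 0" by (rule gdist_le_exits) simp_all
    then show ?thesis using 6 uw \<open>0 < len e\<close> by (simp add: edge_point_def)
  qed
qed

end

lemma (in Metric_space) mball_subset_closedin_if_dense:
  assumes "mtopology closure_of A = M" "closedin mtopology C" "A \<inter> mball x r \<subseteq> C"
  shows "mball x r \<subseteq> C"
proof -
  have "mball x r \<subseteq> mtopology closure_of (mball x r \<inter> A)"
    using openin_Int_closure_of_subset[OF openin_mball, of x r A] assms(1) mball_subset_mspace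
    by blast
  also have "\<dots> \<subseteq> C"
    using assms(2,3) by (intro closure_of_minimal) auto
  finally show ?thesis .
qed

locale graph_completion = mgraph V E ends len B
  for V :: "'v set" and E :: "'e set" and ends :: "'e \<Rightarrow> 'v \<times> 'v"
    and len :: "'e \<Rightarrow> real" and B :: "'v set" +
  fixes X :: "'p set" and D :: "'p \<Rightarrow> 'p \<Rightarrow> real" and \<iota> :: "('v, 'e) gpoint \<Rightarrow> 'p"
  assumes completion: "is_completion (gpoints V E len) (gdist E ends len) X D \<iota>"
begin

sublocale Metric_space X D
  using completion unfolding is_completion_def by (rule conjunct1)

lemma
  shows iota_in: "g \<in> G \<Longrightarrow> \<iota> g \<in> X"
    and dist_iota: "g \<in> G \<Longrightarrow> h \<in> G \<Longrightarrow> D (\<iota> g) (\<iota> h) = gd g h"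
    and closure_of_graph: "mtopology closure_of (\<iota> ` G) = X"
  using completion unfolding is_completion_def by (simp_all add: image_subset_iff)

lemma dist_edge_point_le:
  assumes "e \<in> E" shows "D (\<iota> (edge_point e s)) (\<iota> (edge_point e t)) \<le> \<bar>s - t\<bar>"
proof (cases "s \<le> t")
  case True
  then show ?thesis
    using gdist_edge_point_le[OF assms True] by (simp add: dist_iota edge_point_in_G assms)
next
  case False
  have "D (\<iota> (edge_point e s)) (\<iota> (edge_point e t)) = gd (edge_point e t) (edge_point e s)"
    by (simp add: commute[of "\<iota> (edge_point e s)" "\<iota> (edge_point e t)"] dist_iota
        edge_point_in_G assms)
  then show ?thesis using gdist_edge_point_le[OF assms, of t s] False by simp
qed

lemma continuous_map_edge_point:
  assumes "e \<in> E" shows "continuous_map euclideanreal mtopology (\<iota> \<circ> edge_point e)"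
  unfolding continuous_map_to_metric
proof (intro ballI allI impI)
  fix s :: real and \<epsilon> :: real assume "0 < \<epsilon>"
  have "(\<iota> \<circ> edge_point e) s' \<in> mball ((\<iota> \<circ> edge_point e) s) \<epsilon>" if "s' \<in> ball s \<epsilon>" for s'
    using that dist_edge_point_le[OF assms, of s s'] iota_in edge_point_in_G[OF assms]
    by (simp add: dist_real_def)
  then show "\<exists>U. openin euclideanreal U \<and> s \<in> U \<and>
      (\<forall>s'\<in>U. (\<iota> \<circ> edge_point e) s' \<in> mball ((\<iota> \<circ> edge_point e) s) \<epsilon>)"
    using \<open>0 < \<epsilon>\<close> by (intro exI[of _ "ball s \<epsilon>"]) auto
qed

lemma compactin_edge: "e \<in> E \<Longrightarrow> compactin mtopology ((\<iota> \<circ> edge_point e) ` {0..len e})"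
  by (rule image_compactin[OF _ continuous_map_edge_point]) simp_all

text \<open>The compact, hence closed, star of edges at g contains the graph points of the ball, which
  are dense in it.\<close>

lemma mball_local_radius:
  assumes "g \<in> G"
  shows "mball (\<iota> g) (local_radius g) \<subseteq> \<iota> ` {h \<in> G. gd g h < local_radius g}"
proof -
  define C where "C = insert (\<iota> g) (\<Union>e\<in>local_edges g. (\<iota> \<circ> edge_point e) ` {0..len e})"
  have edges: "e \<in> E" if "e \<in> local_edges g" for e
    using that local_edges_subset[OF assms] by blast
  have "compactin mtopology (\<Union>e\<in>local_edges g. (\<iota> \<circ> edge_point e) ` {0..len e})"
    by (intro compactin_Union finite_imageI finite_local_edges[OF assms])
      (blast intro: compactin_edge edges)
  then have "compactin mtopology C"
    using compactin_Un[of mtopology "{\<iota> g}"] iota_in[OF assms] unfolding C_def by simp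
  then have "closedin mtopology C" by (rule compactin_imp_closedin[OF Hausdorff_space_mtopology])
  moreover have "\<iota> ` G \<inter> mball (\<iota> g) (local_radius g) \<subseteq> C"
  proof
    fix p assume p: "p \<in> \<iota> ` G \<inter> mball (\<iota> g) (local_radius g)"
    then obtain h where h: "h \<in> G" "p = \<iota> h" by blast
    then have "gd g h < local_radius g" using p assms dist_iota by simp
    from near_point_cases[OF assms h(1) this] show "p \<in> C"
    proof
      assume "\<exists>e\<in>local_edges g. \<exists>s. h = EdgePt e s"
      then obtain e s where e: "e \<in> local_edges g" "h = EdgePt e s" by blast
      then have "p = (\<iota> \<circ> edge_point e) s" "s \<in> {0..len e}"
        using h(1,2) edge_point_EdgePt by auto
      then show "p \<in> C" unfolding C_def using e(1) by blast
    qed (simp add: C_def h(2))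
  qed
  ultimately have "mball (\<iota> g) (local_radius g) \<subseteq> C"
    by (rule mball_subset_closedin_if_dense[OF closure_of_graph])
  moreover have "C \<subseteq> \<iota> ` G"
    unfolding C_def using assms edge_point_in_G edges by (auto intro!: imageI)
  ultimately have ball: "mball (\<iota> g) (local_radius g) \<subseteq> \<iota> ` G" by blast
  show ?thesis
  proof
    fix p assume p: "p \<in> mball (\<iota> g) (local_radius g)"
    then obtain h where "h \<in> G" "p = \<iota> h" using ball by blast
    moreover from this have "gd g h < local_radius g" using p assms dist_iota by simp
    ultimately show "p \<in> \<iota> ` {h \<in> G. gd g h < local_radius g}" by blast
  qed
qed

lemma finite_frontier_nbhd_base_graph: "finite_frontier_nbhd_base mtopology (\<iota> ` G)"
  unfolding finite_frontier_nbhd_base_def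
proof (intro ballI allI impI)
  fix p N assume "p \<in> \<iota> ` G" and N: "openin mtopology N \<and> p \<in> N"
  then obtain g where g: "g \<in> G" "p = \<iota> g" by blast
  obtain r0 where r0: "0 < r0" "mball p r0 \<subseteq> N" using N openin_mtopology by blast
  define r where "r = min r0 (local_radius g) / 2"
  have r: "0 < r" "r < local_radius g" "r < r0"
    using r0(1) local_radius_pos[OF g(1)] unfolding r_def by auto
  have cl: "mtopology closure_of mball p r \<subseteq> mcball p r"
    by (rule closure_of_minimal[OF mball_subset_mcball closedin_mcball])
  have "mtopology frontier_of mball p r \<subseteq> \<iota> ` {h \<in> G. gd g h = r}"
  proof
    fix q assume "q \<in> mtopology frontier_of mball p r"
    then have q: "q \<in> mcball p r" "q \<notin> mball p r" using cl by (auto simp: frontier_of_openin)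
    then have "q \<in> mball p (local_radius g)" using r(2) by auto
    then obtain h where h: "h \<in> G" "q = \<iota> h" using mball_local_radius[OF g(1)] g(2) by blast
    then have "gd g h = r" using q g(2) dist_iota[OF g(1) h(1)] by auto
    then show "q \<in> \<iota> ` {h \<in> G. gd g h = r}" using h by blast
  qed
  moreover have "finite (\<iota> ` {h \<in> G. gd g h = r})"
    using finite_gdist_sphere[OF g(1) r(1,2)] by simp
  ultimately have "finite_frontier_openin mtopology (\<iota> ` G) (mball p r)"
    unfolding finite_frontier_openin_def by (auto dest: finite_subset)
  moreover have "p \<in> mball p r" using g iota_in r(1) by simp
  moreover have "mcball p r \<subseteq> mball p r0" using r(3) by auto
  then have "mtopology closure_of mball p r \<subseteq> N" using cl r0(2) by blast
  ultimately show "\<exists>U. finite_frontier_openin mtopology (\<iota> ` G) U \<and> p \<in> U \<and>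
      mtopology closure_of U \<subseteq> N"
    by blast
qed

lemma mball_local_radius_interior:
  assumes "g \<in> G"
  shows "mball (\<iota> g) (local_radius g) \<subseteq> insert (\<iota> g) (\<iota> ` (G - Vert ` V))"
proof
  fix p assume "p \<in> mball (\<iota> g) (local_radius g)"
  then obtain h where h: "h \<in> G" "p = \<iota> h" "gd g h < local_radius g"
    using mball_local_radius[OF assms] by blast
  from near_point_cases[OF assms h(1,3)] have "h = g \<or> h \<in> G - Vert ` V"
    using h(1) by auto
  then show "p \<in> insert (\<iota> g) (\<iota> ` (G - Vert ` V))" using h(2) by blast
qed

lemma openin_graph_interior: "openin mtopology (\<iota> ` (G - Vert ` B))"
  unfolding openin_mtopology
proof (intro conjI allI impI)
  show "\<iota> ` (G - Vert ` B) \<subseteq> X" using iota_in by blast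
  fix q assume "q \<in> \<iota> ` (G - Vert ` B)"
  then obtain g where g: "g \<in> G - Vert ` B" "q = \<iota> g" by blast
  have "insert (\<iota> g) (\<iota> ` (G - Vert ` V)) \<subseteq> \<iota> ` (G - Vert ` B)"
    using g(1) boundary_subset by blast
  then have "mball q (local_radius g) \<subseteq> \<iota> ` (G - Vert ` B)"
    using mball_local_radius_interior[of g] g by blast
  then show "\<exists>r>0. mball q r \<subseteq> \<iota> ` (G - Vert ` B)" using local_radius_pos g by blast
qed

lemma isolated_in_boundary:
  assumes "p \<in> (X - \<iota> ` (G - Vert ` B)) \<inter> \<iota> ` G"
  shows "\<exists>N. openin mtopology N \<and> N \<inter> (X - \<iota> ` (G - Vert ` B)) = {p}"
proof -
  obtain g where g: "g \<in> G" "p = \<iota> g" using assms by blast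
  have "\<iota> ` (G - Vert ` V) \<subseteq> \<iota> ` (G - Vert ` B)" using boundary_subset by blast
  then have "mball p (local_radius g) \<inter> (X - \<iota> ` (G - Vert ` B)) \<subseteq> {p}"
    using mball_local_radius_interior[OF g(1)] g(2) by blast
  moreover have "p \<in> mball p (local_radius g)"
    using assms local_radius_pos[OF g(1)] by simp
  ultimately have "mball p (local_radius g) \<inter> (X - \<iota> ` (G - Vert ` B)) = {p}"
    using assms by blast
  then show ?thesis using openin_mball by blast
qed

end

theorem theorem2p5:
  fixes V :: "'v set" and E :: "'e set" and ends :: "'e \<Rightarrow> 'v \<times> 'v"
    and len :: "'e \<Rightarrow> real" and B :: "'v set"
    and X :: "'p set" and D :: "'p \<Rightarrow> 'p \<Rightarrow> real" and \<iota> :: "('v, 'e) gpoint \<Rightarrow> 'p"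
  assumes "metric_graph V E ends len B"
    and "is_completion (gpoints V E len) (gdist E ends len) X D \<iota>"
    and "compact_space (Metric_space.mtopology X D)"
  shows "totally_disconnected_in (Metric_space.mtopology X D)
             (X - \<iota> ` (gpoints V E len - Vert ` B))
         \<longleftrightarrow> weakly_connected (Metric_space.mtopology X D) (\<iota> ` gpoints V E len)"
proof -
  interpret graph_completion V E ends len B X D \<iota>
    using assms(1,2) by unfold_locales
  let ?S = "X - \<iota> ` (G - Vert ` B)"
  have "closedin mtopology ?S"
    using closedin_diff[OF closedin_topspace openin_graph_interior] by simp
  moreover have "topspace mtopology - \<iota> ` G \<subseteq> ?S" by auto
  ultimately have "totally_disconnected_in mtopology ?S \<Longrightarrow> weakly_connected mtopology (\<iota> ` G)"
    by (intro weakly_connected_if_totally_disconnected[OF assms(3) Hausdorff_space_mtopology]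
        finite_frontier_nbhd_base_graph)
  moreover have "weakly_connected mtopology (\<iota> ` G) \<Longrightarrow> totally_disconnected_in mtopology ?S"
    using isolated_in_boundary Hausdorff_imp_t1_space[OF Hausdorff_space_mtopology]
    by (intro totally_disconnected_if_weakly_connected) simp_all
  ultimately show ?thesis by blast
qed

end
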